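(* Let $d\ge2$ and let $\mathcal{O}$ be a collection of convex objects in $\mathbb{R}^d$ which is closed under rotations and translations. The following are equivalent: (1) $\mathcal{O}$ is $k_0$-fat for some $k_0\ge1$; (2) $\mathcal{O}$ is $k_1$-globally fat for some $k_1\ge1$; (3) $\mathcal{O}$ is $k_2$-thick for some $k_2\ge1$; (4) $\mathcal{O}$ is $k_3$-locally fat for some $k_3\ge2$.
   Context: An object in $\mathbb{R}^d$ is a path-connected compact set; its size is the side length of its smallest enclosing axis-aligned hypercube. $\mathrm{vol}$ denotes Lebesgue measure. A collection is $c$-fat if for every $r\in\mathbb{R}$ and every closed axis-aligned box $R$ of side length $r$ there are at most $c$ pairwise non-intersecting objects of the collection of size at least $r$ intersecting $R$. An object $O$ is $k$-locally fat if for every closed $d$-dimensional ball $B$ with center in $O$ whose boundary intersects $O$, $\mathrm{vol}(B)\le k^d\,\mathrm{vol}(O\cap B)$. It is $k$-globally fat if there are balls $B_{in}\subseteq O\subseteq B_{out}$ with radii $R_{in},R_{out}$ satisfying $R_{out}\le kR_{in}$. It is $k$-thick if $\mathrm{vol}(B_O)\le k^d\mathrm{vol}(O)$, where $B_O$ is the minimal enclosing ball of $O$. A collection is $k$-locally fat / $k$-globally fat / $k$-thick if every member is. *)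

theory Defs
  imports "HOL-Analysis.Analysis"
begin

text \<open>Ambient space: R^d rendered as real^'n, d = CARD('n).\<close>

definition is_object :: "(real^'n) set \<Rightarrow> bool" where
  "is_object X \<longleftrightarrow> X \<noteq> {} \<and> compact X \<and> path_connected X"

text \<open>Side length of the smallest enclosing axis-aligned hypercube.\<close>
definition obj_size :: "(real^'n) set \<Rightarrow> real" where
  "obj_size X = Max ((\<lambda>i. (SUP x\<in>X. x $ i) - (INF x\<in>X. x $ i)) ` UNIV)"

definition axis_cube :: "real^'n \<Rightarrow> real \<Rightarrow> (real^'n) set" where
  "axis_cube a r = cbox a (a + r *\<^sub>R One)"

definition fat_collection :: "real \<Rightarrow> (real^'n) set set \<Rightarrow> bool" where
  "fat_collection c C \<longleftrightarrow>
     (\<forall>r a S. 0 \<le> r \<longrightarrow> S \<subseteq> C \<longrightarrow> pairwise disjnt S \<longrightarrow>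
        (\<forall>X\<in>S. obj_size X \<ge> r \<and> X \<inter> axis_cube a r \<noteq> {}) \<longrightarrow>
        finite S \<and> real (card S) \<le> c)"

definition locally_fat :: "real \<Rightarrow> (real^'n) set \<Rightarrow> bool" where
  "locally_fat k X \<longleftrightarrow>
     (\<forall>c r. c \<in> X \<longrightarrow> 0 \<le> r \<longrightarrow> sphere c r \<inter> X \<noteq> {} \<longrightarrow>
        measure lebesgue (cball c r) \<le> k ^ CARD('n) * measure lebesgue (X \<inter> cball c r))"

definition globally_fat :: "real \<Rightarrow> (real^'n) set \<Rightarrow> bool" where
  "globally_fat k X \<longleftrightarrow>
     (\<exists>c1 r1 c2 r2. 0 \<le> r1 \<and> 0 \<le> r2 \<and> cball c1 r1 \<subseteq> X \<and> X \<subseteq> cball c2 r2 \<and> r2 \<le> k * r1)"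

definition min_enclosing_ball :: "(real^'n) set \<Rightarrow> real^'n \<Rightarrow> real \<Rightarrow> bool" where
  "min_enclosing_ball X c r \<longleftrightarrow> 0 \<le> r \<and> X \<subseteq> cball c r \<and>
     (\<forall>c' r'. X \<subseteq> cball c' r' \<longrightarrow> r \<le> r')"

definition thick :: "real \<Rightarrow> (real^'n) set \<Rightarrow> bool" where
  "thick k X \<longleftrightarrow>
     (\<forall>c r. min_enclosing_ball X c r \<longrightarrow>
        measure lebesgue (cball c r) \<le> k ^ CARD('n) * measure lebesgue X)"

definition rotation :: "(real^'n \<Rightarrow> real^'n) \<Rightarrow> bool" where
  "rotation f \<longleftrightarrow> orthogonal_transformation f \<and> det (matrix f) = 1"

end

theory Submission
  imports Defs
begin

text \<open>
  Among the simplices spanned by points of a bounded convex body X pick one whose volume is at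
  least half the supremum. By Cramer's rule every point of X has barycentric coordinates of
  absolute value at most 2 with respect to it, so X lies in a slab of width 2h along the longest
  row w of the inverse vertex matrix (h = 2/|w|), while the simplex contains a ball of radius
  h/(4d); if no simplex is full-dimensional, X lies in a hyperplane and h = 0. In a k-fat collection, m + 1 > k translates of X spaced just over 2h apart across the
  slab are pairwise disjoint, have the size s of X and all meet one cube of side s; hence
  s <= 2mh, and X lies between two balls whose radii differ by a factor O(d^2 k).

  The remaining implications compare volumes of balls. Shrinking a convex X towards one of its
  points c by the factor r / diam X keeps it inside X and the ball B(c, r), so thickness gives
  local fatness. Conversely, a locally fat member of size at least r meeting a cube of side r
  fills a definite fraction of a ball of radius r/2 inside a fixed ball of radius 2dr, which
  bounds the number of pairwise disjoint such members.
\<close>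

section \<open>Convex bodies between a slab and a ball\<close>

lemma abs_det_le_fact_mult_power:
  fixes A :: "real^'n^'n"
  assumes "\<And>i j. \<bar>A $ i $ j\<bar> \<le> B"
  shows "\<bar>det A\<bar> \<le> fact CARD('n) * B ^ CARD('n)"
proof -
  let ?P = "{p. p permutes (UNIV::'n set)}"
  have "\<bar>det A\<bar> \<le> (\<Sum>p\<in>?P. \<bar>of_int (sign p) * (\<Prod>i\<in>UNIV. A $ i $ p i)\<bar>)"
    unfolding det_def by (rule sum_abs)
  also have "\<dots> \<le> (\<Sum>p\<in>?P. B ^ CARD('n))"
  proof (rule sum_mono)
    fix p
    have "\<bar>of_int (sign p) * (\<Prod>i\<in>UNIV. A $ i $ p i)\<bar> = (\<Prod>i\<in>UNIV. \<bar>A $ i $ p i\<bar>)"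
      by (simp add: abs_mult abs_prod sign_def)
    also have "\<dots> \<le> (\<Prod>i\<in>(UNIV::'n set). B)"
      by (rule prod_mono) (use assms in auto)
    finally show "\<bar>of_int (sign p) * (\<Prod>i\<in>UNIV. A $ i $ p i)\<bar> \<le> B ^ CARD('n)" by simp
  qed
  also have "\<dots> = fact CARD('n) * B ^ CARD('n)"
    using card_permutations[of "UNIV::'n set" "CARD('n)"] by simp
  finally show ?thesis .
qed

lemma normal_vector_if_det_columns_zero:
  fixes S :: "(real^'n) set"
  assumes "\<And>A :: real^'n^'n. columns A \<subseteq> S \<Longrightarrow> det A = 0"
  obtains u where "u \<noteq> 0" "\<And>y. y \<in> S \<Longrightarrow> inner u y = 0"
proof -
  have "dim S < DIM(real^'n)"
  proof (rule ccontr)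
    assume "\<not> dim S < DIM(real^'n)"
    then have dS: "dim S = CARD('n)" using dim_subset_UNIV_cart[of S] by simp
    obtain B where B: "B \<subseteq> S" "independent B" "S \<subseteq> span B" "card B = dim S"
      by (rule basis_exists)
    obtain f where f: "bij_betw f (UNIV::'n set) B"
      using finite_same_card_bij[of "UNIV::'n set" B] B(2,4) dS independent_bound by auto
    define A :: "real^'n^'n" where "A = transpose (\<chi> j. f j)"
    have "column j A = f j" for j
      by (simp add: A_def row_def)
    then have "columns A = B"
      using f unfolding columns_def bij_betw_def by auto
    then have "rank A = CARD('n)"
      using B dS by (simp add: column_rank_def dim_eq_card_independent)
    then have "det A \<noteq> 0" by (simp add: det_eq_0_rank)
    then show False using assms \<open>columns A = B\<close> B(1) by blast
  qed
  then obtain u where "u \<noteq> 0" "\<And>y. y \<in> span S \<Longrightarrow> orthogonal u y"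
    by (meson orthogonal_to_subspace_exists)
  then show thesis
    using that[of u] by (simp add: orthogonal_def span_base)
qed

lemma convex_add_sum_scaleR_mem:
  fixes X :: "'a::real_vector set"
  assumes X: "convex X" "v \<in> X" and I: "finite I" and g: "\<And>j. j \<in> I \<Longrightarrow> v + g j \<in> X"
    and l: "\<And>j. j \<in> I \<Longrightarrow> 0 \<le> l j" "sum l I \<le> 1"
  shows "v + (\<Sum>j\<in>I. l j *\<^sub>R g j) \<in> X"
proof (cases "sum l I = 0")
  case True
  then have "\<forall>j\<in>I. l j = 0" using sum_nonneg_eq_0_iff[OF I] l(1) by blast
  then show ?thesis using X(2) by simp
next
  case False
  define t where "t = sum l I"
  have t: "0 < t" "t \<le> 1" using False l sum_nonneg[of I l] unfolding t_def by force+
  have "(\<Sum>j\<in>I. (l j / t) *\<^sub>R (v + g j)) \<in> X"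
    using convex_sum[OF I X(1), of "\<lambda>j. l j / t" "\<lambda>j. v + g j"] g l t
    by (simp add: sum_divide_distrib[symmetric] t_def)
  moreover have "(\<Sum>j\<in>I. (l j / t) *\<^sub>R (v + g j))
      = (\<Sum>j\<in>I. l j / t) *\<^sub>R v + (1 / t) *\<^sub>R (\<Sum>j\<in>I. l j *\<^sub>R g j)"
    by (simp add: scaleR_add_right sum.distrib scaleR_sum_left scaleR_sum_right)
  moreover have "(\<Sum>j\<in>I. l j / t) = 1"
    using t by (simp add: sum_divide_distrib[symmetric] t_def)
  ultimately have "(1 - t) *\<^sub>R v + t *\<^sub>R (v + (1 / t) *\<^sub>R (\<Sum>j\<in>I. l j *\<^sub>R g j)) \<in> X"
    using convexD[OF X(1) X(2)] t by simp
  then show ?thesis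
    using t by (simp add: algebra_simps)
qed

lemma inverse_coordinates_in_simplex:
  fixes A N :: "real^'n^'n"
  assumes inv: "N ** A = mat 1" and M: "\<And>j. norm (N $ j) \<le> M"
    and \<rho>: "0 \<le> \<rho>" "2 * real CARD('n) * M * \<rho> \<le> 1"
    and y: "y \<in> cball (v + A *v (\<chi> j. \<rho> * norm (N $ j))) \<rho>"
  shows "\<And>j. 0 \<le> (N *v (y - v)) $ j" and "(\<Sum>j\<in>UNIV. (N *v (y - v)) $ j) \<le> 1"
proof -
  define c where "c = (\<chi> j. \<rho> * norm (N $ j))"
  define z where "z = v + A *v c"
  have yz: "norm (y - z) \<le> \<rho>" using y by (simp add: z_def c_def dist_norm norm_minus_commute)
  have Nzc: "N *v (z - v) = c"
    by (simp add: z_def matrix_vector_mul_assoc inv)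
  have l: "(N *v (y - v)) $ j = c $ j + inner (N $ j) (y - z)" for j
  proof -
    have "(N *v (y - v)) $ j = inner (N $ j) (z - v) + inner (N $ j) (y - z)"
      by (simp add: matrix_vector_mul_component flip: inner_add_right)
    also have "inner (N $ j) (z - v) = c $ j"
      using Nzc matrix_vector_mul_component[of N "z - v" j] by simp
    finally show ?thesis .
  qed
  show "0 \<le> (N *v (y - v)) $ j" for j
  proof -
    have "\<bar>inner (N $ j) (y - z)\<bar> \<le> norm (N $ j) * \<rho>"
      using Cauchy_Schwarz_ineq2[of "N $ j" "y - z"] yz
      by (meson mult_left_mono norm_ge_zero order_trans)
    then show ?thesis by (simp add: l c_def mult.commute)
  qed
  have "(\<Sum>j\<in>UNIV. (N *v (y - v)) $ j)
      = \<rho> * (\<Sum>j\<in>UNIV. norm (N $ j)) + inner (\<Sum>j\<in>UNIV. N $ j) (y - z)"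
    by (simp add: l c_def sum.distrib inner_sum_left sum_distrib_left)
  also have "\<dots> \<le> \<rho> * (\<Sum>j\<in>UNIV. norm (N $ j)) + (\<Sum>j\<in>UNIV. norm (N $ j)) * \<rho>"
  proof -
    have "inner (\<Sum>j\<in>UNIV. N $ j) (y - z) \<le> norm (\<Sum>j\<in>UNIV. N $ j) * norm (y - z)"
      by (rule norm_cauchy_schwarz)
    also have "\<dots> \<le> (\<Sum>j\<in>UNIV. norm (N $ j)) * \<rho>"
      using yz by (intro mult_mono norm_sum) (auto intro: sum_nonneg)
    finally show ?thesis by (simp add: mult.commute)
  qed
  also have "\<dots> \<le> 2 * real CARD('n) * M * \<rho>"
    using mult_left_mono[OF sum_bounded_above[of UNIV "\<lambda>j. norm (N $ j)" M] \<rho>(1)] M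
    by (simp add: algebra_simps)
  finally show "(\<Sum>j\<in>UNIV. (N *v (y - v)) $ j) \<le> 1" using \<rho>(2) by linarith
qed

lemma cball_subset_convex_simplex:
  fixes A N :: "real^'n^'n"
  assumes X: "convex X" "v \<in> X" "\<And>j. v + column j A \<in> X"
    and inv: "A ** N = mat 1" "N ** A = mat 1"
    and M: "\<And>j. norm (N $ j) \<le> M" and \<rho>: "0 \<le> \<rho>" "2 * real CARD('n) * M * \<rho> \<le> 1"
  shows "cball (v + A *v (\<chi> j. \<rho> * norm (N $ j))) \<rho> \<subseteq> X"
proof
  fix y assume y: "y \<in> cball (v + A *v (\<chi> j. \<rho> * norm (N $ j))) \<rho>"
  have "(\<Sum>j\<in>UNIV. (N *v (y - v)) $ j *\<^sub>R column j A) = y - v"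
    by (simp add: matrix_vector_mul_assoc inv(1) flip: matrix_mult_sum scalar_mult_eq_scaleR)
  then show "y \<in> X"
    using convex_add_sum_scaleR_mem[OF X(1,2), where I = UNIV and g = "\<lambda>j. column j A"
        and l = "\<lambda>j. (N *v (y - v)) $ j"]
      X(3) inverse_coordinates_in_simplex[OF inv(2) M \<rho> y] by simp
qed

lemma abs_inverse_coordinate_le_if_near_max_det:
  fixes A N :: "real^'n^'n"
  assumes inv: "A ** N = mat 1" and S: "columns A \<subseteq> S" "y \<in> S"
    and max: "\<And>B :: real^'n^'n. columns B \<subseteq> S \<Longrightarrow> \<bar>det B\<bar> \<le> K * \<bar>det A\<bar>"
  shows "\<bar>(N *v y) $ k\<bar> \<le> K"
proof -
  \<comment> \<open>A with its k-th column replaced by y, written in the form expected by \<open>cramer_lemma\<close>\<close>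
  define B :: "real^'n^'n" where "B = (\<chi> i j. if j = k then (A *v (N *v y)) $ i else A $ i $ j)"
  have "A *v (N *v y) = y" by (simp add: matrix_vector_mul_assoc inv)
  then have "column j B = (if j = k then y else column j A)" for j
    by (simp add: B_def column_def vec_eq_iff)
  then have "columns B \<subseteq> S"
    using S unfolding columns_def by auto
  moreover have "det B = (N *v y) $ k * det A"
    unfolding B_def by (rule cramer_lemma)
  ultimately have "\<bar>(N *v y) $ k\<bar> * \<bar>det A\<bar> \<le> K * \<bar>det A\<bar>"
    using max[of B] by (simp add: abs_mult)
  moreover have "det A \<noteq> 0"
    using inv invertible_det_nz invertible_right_inverse by blast
  ultimately show ?thesis by simp
qed

lemma exists_near_max_det:
  fixes S :: "(real^'n) set"
  assumes "bounded S" and "columns A0 \<subseteq> S" "det A0 \<noteq> 0"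
  obtains A :: "real^'n^'n" where "columns A \<subseteq> S" "det A \<noteq> 0"
    "\<And>B :: real^'n^'n. columns B \<subseteq> S \<Longrightarrow> \<bar>det B\<bar> \<le> 2 * \<bar>det A\<bar>"
proof -
  define D where "D = {\<bar>det B\<bar> | B :: real^'n^'n. columns B \<subseteq> S}"
  obtain R where R: "\<And>y. y \<in> S \<Longrightarrow> norm y \<le> R"
    using assms(1) bounded_iff by blast
  have "\<bar>det B\<bar> \<le> fact CARD('n) * R ^ CARD('n)" if "columns B \<subseteq> S" for B :: "real^'n^'n"
  proof (rule abs_det_le_fact_mult_power)
    fix i j
    have "column j B \<in> S" using that by (auto simp: columns_def)
    then show "\<bar>B $ i $ j\<bar> \<le> R"
      using R component_le_norm_cart[of "column j B" i] by (fastforce simp: column_def)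
  qed
  then have bdd: "bdd_above D"
    unfolding D_def by (intro bdd_aboveI[where M = "fact CARD('n) * R ^ CARD('n)"]) auto
  have "\<bar>det A0\<bar> \<in> D" using assms(2) unfolding D_def by blast
  then have pos: "0 < Sup D" using assms(3) cSup_upper[OF _ bdd] by fastforce
  then obtain e where "e \<in> D" "Sup D / 2 < e"
    using less_cSup_iff[OF _ bdd, of "Sup D / 2"] \<open>\<bar>det A0\<bar> \<in> D\<close> by auto
  then obtain A :: "real^'n^'n" where A: "columns A \<subseteq> S" "Sup D / 2 < \<bar>det A\<bar>"
    unfolding D_def by blast
  show thesis
  proof (rule that[OF A(1)])
    show "det A \<noteq> 0" using A(2) pos by auto
    show "\<bar>det B\<bar> \<le> 2 * \<bar>det A\<bar>" if "columns B \<subseteq> S" for B :: "real^'n^'n"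
      using cSup_upper[OF _ bdd, of "\<bar>det B\<bar>"] that A(2) unfolding D_def by fastforce
  qed
qed

lemma max_norm_row_of_left_inverse:
  fixes N :: "real^'n^'n"
  assumes "N ** A = mat 1"
  obtains k where "\<And>j. norm (N $ j) \<le> norm (N $ k)" "0 < norm (N $ k)"
proof -
  have "Max (range (\<lambda>j. norm (N $ j))) \<in> range (\<lambda>j. norm (N $ j))"
    by (rule Max_in) auto
  then obtain k where k: "Max (range (\<lambda>j. norm (N $ j))) = norm (N $ k)"
    by (rule rangeE)
  have max: "norm (N $ j) \<le> norm (N $ k)" for j
    unfolding k[symmetric] by (rule Max_ge) auto
  have "N $ k \<noteq> 0"
  proof
    assume "N $ k = 0"
    then have "N $ j = 0" for j using max[of j] by simp
    then have "N = 0" by (simp add: vec_eq_iff)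
    then have "(mat 1 :: real^'n^'n) $ k $ k = 0" using assms by simp
    then show False by (simp add: mat_def)
  qed
  then show thesis using that[of k, OF max] by simp
qed

lemma convex_slab_cball_if_near_max_det:
  fixes X :: "(real^'n) set" and A :: "real^'n^'n"
  assumes X: "convex X" "v \<in> X" and A: "columns A \<subseteq> (\<lambda>x. x - v) ` X" "det A \<noteq> 0"
    and max: "\<And>B :: real^'n^'n. columns B \<subseteq> (\<lambda>x. x - v) ` X \<Longrightarrow> \<bar>det B\<bar> \<le> 2 * \<bar>det A\<bar>"
  obtains u b h z where "norm u = 1" "0 \<le> h" "\<And>x. x \<in> X \<Longrightarrow> \<bar>inner u x - b\<bar> \<le> h"
    "cball z (h / (4 * real CARD('n))) \<subseteq> X"
proof -
  obtain N where N: "A ** N = mat 1" "N ** A = mat 1"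
    using invertible_det_nz[of A] A(2) unfolding invertible_def by blast
  obtain k where k: "\<And>j. norm (N $ j) \<le> norm (N $ k)" "0 < norm (N $ k)"
    using max_norm_row_of_left_inverse[OF N(2)] by metis
  define u where "u = N $ k /\<^sub>R norm (N $ k)"
  define h where "h = 2 / norm (N $ k)"
  have slab: "\<bar>inner u x - inner u v\<bar> \<le> h" if "x \<in> X" for x
  proof -
    have "\<bar>(N *v (x - v)) $ k\<bar> \<le> 2"
      using abs_inverse_coordinate_le_if_near_max_det[OF N(1) A(1) _ max] that by blast
    moreover have "inner u x - inner u v = (N *v (x - v)) $ k / norm (N $ k)"
      by (simp add: u_def matrix_vector_mul_component inner_diff_right diff_divide_distrib
          divide_inverse_commute right_diff_distrib)
    ultimately show ?thesis
      using k(2) by (simp add: h_def abs_div divide_right_mono)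
  qed
  have "cball (v + A *v (\<chi> j. h / (4 * real CARD('n)) * norm (N $ j))) (h / (4 * real CARD('n)))
      \<subseteq> X"
  proof (rule cball_subset_convex_simplex[OF X _ N k(1)])
    show "v + column j A \<in> X" for j
    proof -
      have "column j A \<in> (\<lambda>x. x - v) ` X" using A(1) by (auto simp: columns_def)
      then show ?thesis by auto
    qed
    show "0 \<le> h / (4 * real CARD('n))"
      using k(2) by (simp add: h_def)
    show "2 * real CARD('n) * norm (N $ k) * (h / (4 * real CARD('n))) \<le> 1"
      using k(2) by (simp add: h_def)
  qed
  moreover have "norm u = 1" "0 \<le> h"
    using k(2) by (simp_all add: u_def h_def)
  ultimately show thesis
    using that slab by blast
qed

lemma bounded_convex_slab_cball:
  fixes X :: "(real^'n) set"
  assumes X: "convex X" "bounded X" "v \<in> X"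
  obtains u b h z where "norm u = 1" "0 \<le> h" "\<And>x. x \<in> X \<Longrightarrow> \<bar>inner u x - b\<bar> \<le> h"
    "cball z (h / (4 * real CARD('n))) \<subseteq> X"
proof -
  define S where "S = (\<lambda>x. x - v) ` X"
  show thesis
  proof (cases "\<forall>A :: real^'n^'n. columns A \<subseteq> S \<longrightarrow> det A = 0")
    case True
    then have "\<And>A :: real^'n^'n. columns A \<subseteq> S \<Longrightarrow> det A = 0" by blast
    then obtain w where w: "w \<noteq> 0" "\<And>y. y \<in> S \<Longrightarrow> inner w y = 0"
      using normal_vector_if_det_columns_zero by metis
    define u where "u = w /\<^sub>R norm w"
    have "norm u = 1" using w(1) by (simp add: u_def)
    moreover have "\<bar>inner u x - inner u v\<bar> \<le> 0" if "x \<in> X" for x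
      using w(2)[of "x - v"] that by (simp add: S_def u_def inner_diff_right)
    moreover have "cball v (0 / (4 * real CARD('n))) \<subseteq> X" using X(3) by simp
    ultimately show thesis using that by blast
  next
    case False
    have "bounded S"
      using bounded_translation[OF X(2), of "- v"] by (simp add: S_def)
    moreover obtain A0 :: "real^'n^'n" where "columns A0 \<subseteq> S" "det A0 \<noteq> 0"
      using False by blast
    ultimately obtain A :: "real^'n^'n" where A: "columns A \<subseteq> S" "det A \<noteq> 0"
      "\<And>B :: real^'n^'n. columns B \<subseteq> S \<Longrightarrow> \<bar>det B\<bar> \<le> 2 * \<bar>det A\<bar>"
      using exists_near_max_det by metis
    show thesis
      using A that unfolding S_def by (rule convex_slab_cball_if_near_max_det[OF X(1,3)])
  qed
qed

section \<open>Size of objects\<close>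

lemma bounded_imp_bdd_component:
  fixes X :: "(real^'n) set"
  assumes "bounded X"
  shows "bdd_above ((\<lambda>x. x $ i) ` X)" "bdd_below ((\<lambda>x. x $ i) ` X)"
  using bounded_linear_image[OF assms bounded_linear_vec_nth]
  by (auto intro: bounded_imp_bdd_above bounded_imp_bdd_below)

lemma obj_size_translation:
  fixes X :: "(real^'n) set"
  assumes "bounded X" "X \<noteq> {}"
  shows "obj_size ((\<lambda>x. x + a) ` X) = obj_size X"
proof -
  have "(SUP y\<in>(\<lambda>x. x + a) ` X. y $ i) = a $ i + (SUP x\<in>X. x $ i)" for i
  proof -
    have "(SUP y\<in>(\<lambda>x. x + a) ` X. y $ i) = (SUP x\<in>X. a $ i + x $ i)"
      by (simp add: image_image add.commute)
    also have "\<dots> = a $ i + (SUP x\<in>X. x $ i)"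
      by (rule Sup_add_eq[OF bounded_imp_bdd_component(1)[OF assms(1)] assms(2)])
    finally show ?thesis .
  qed
  moreover have "(INF y\<in>(\<lambda>x. x + a) ` X. y $ i) = a $ i + (INF x\<in>X. x $ i)" for i
  proof -
    have "(INF y\<in>(\<lambda>x. x + a) ` X. y $ i) = (INF x\<in>X. a $ i + x $ i)"
      by (simp add: image_image add.commute)
    also have "\<dots> = a $ i + (INF x\<in>X. x $ i)"
      by (rule Inf_add_eq[OF bounded_imp_bdd_component(2)[OF assms(1)] assms(2)])
    finally show ?thesis .
  qed
  ultimately show ?thesis
    unfolding obj_size_def by simp
qed

lemma component_diff_le_obj_size:
  fixes X :: "(real^'n) set"
  assumes "bounded X" "x \<in> X" "y \<in> X"
  shows "x $ i - y $ i \<le> obj_size X"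
proof -
  have "x $ i \<le> (SUP x\<in>X. x $ i)"
    by (rule cSUP_upper[OF assms(2) bounded_imp_bdd_component(1)[OF assms(1)]])
  moreover have "(INF x\<in>X. x $ i) \<le> y $ i"
    by (rule cINF_lower[OF bounded_imp_bdd_component(2)[OF assms(1)] assms(3)])
  moreover have "(SUP x\<in>X. x $ i) - (INF x\<in>X. x $ i) \<le> obj_size X"
    unfolding obj_size_def by (rule Max_ge) auto
  ultimately show ?thesis by linarith
qed

lemma obj_size_nonneg:
  fixes X :: "(real^'n) set"
  assumes "bounded X" "X \<noteq> {}"
  shows "0 \<le> obj_size X"
  using component_diff_le_obj_size[OF assms(1)] assms(2) by fastforce

lemma dist_le_card_mult_obj_size:
  fixes X :: "(real^'n) set"
  assumes "bounded X" "x \<in> X" "y \<in> X"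
  shows "dist x y \<le> CARD('n) * obj_size X"
proof -
  have "dist x y \<le> (\<Sum>i\<in>UNIV. \<bar>(x - y) $ i\<bar>)"
    unfolding dist_norm by (rule norm_le_l1_cart)
  also have "\<dots> \<le> (\<Sum>i\<in>(UNIV::'n set). obj_size X)"
    using component_diff_le_obj_size[OF assms] component_diff_le_obj_size[OF assms(1,3,2)]
    by (intro sum_mono) (simp add: abs_le_iff)
  finally show ?thesis by simp
qed

lemma obj_size_le_dist:
  fixes X :: "(real^'n) set"
  assumes "compact X" "X \<noteq> {}"
  obtains x y where "x \<in> X" "y \<in> X" "obj_size X \<le> dist x y"
proof -
  have "obj_size X \<in> range (\<lambda>i. (SUP x\<in>X. x $ i) - (INF x\<in>X. x $ i))"
    unfolding obj_size_def by (rule Max_in) auto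
  then obtain i where i: "obj_size X = (SUP x\<in>X. x $ i) - (INF x\<in>X. x $ i)"
    by (rule rangeE)
  have c: "compact ((\<lambda>x. x $ i) ` X)"
    by (rule compact_continuous_image[OF _ assms(1)]) (intro continuous_intros)
  obtain x where x: "x \<in> X" "\<And>z. z \<in> X \<Longrightarrow> z $ i \<le> x $ i"
    using compact_attains_sup[OF c] assms(2) by blast
  obtain y where y: "y \<in> X" "\<And>z. z \<in> X \<Longrightarrow> y $ i \<le> z $ i"
    using compact_attains_inf[OF c] assms(2) by blast
  have "(SUP x\<in>X. x $ i) \<le> x $ i" "y $ i \<le> (INF x\<in>X. x $ i)"
    using x y assms(2) by (auto intro: cSUP_least cINF_greatest)
  then have "obj_size X \<le> \<bar>(x - y) $ i\<bar>" using i by simp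
  also have "\<dots> \<le> dist x y"
    unfolding dist_norm by (rule component_le_norm_cart)
  finally show thesis using that x(1) y(1) by blast
qed

section \<open>Stacking translates in a fat collection\<close>

lemma mem_axis_cube_iff:
  "p \<in> axis_cube a r \<longleftrightarrow> (\<forall>i. a $ i \<le> p $ i \<and> p $ i \<le> a $ i + r)"
proof -
  have corner: "(a + r *\<^sub>R One) $ i = a $ i + r" for i
    by (simp flip: Cart_1)
  show ?thesis
    unfolding axis_cube_def mem_box_cart corner ..
qed

lemma add_scaleR_mem_axis_cube:
  fixes p u :: "real^'n"
  assumes "norm u \<le> 1" "0 \<le> t" "t \<le> s"
  shows "p + t *\<^sub>R u \<in> axis_cube (\<chi> i. p $ i + min 0 (s * u $ i)) s"
  unfolding mem_axis_cube_iff
proof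
  fix i
  have u: "\<bar>u $ i\<bar> \<le> 1" using component_le_norm_cart[of u i] assms(1) by linarith
  show "(\<chi> i. p $ i + min 0 (s * u $ i)) $ i \<le> (p + t *\<^sub>R u) $ i \<and>
      (p + t *\<^sub>R u) $ i \<le> (\<chi> i. p $ i + min 0 (s * u $ i)) $ i + s"
  proof (cases "0 \<le> u $ i")
    case True
    have "0 \<le> s" using assms by linarith
    have "0 \<le> t * u $ i" using True assms(2) by simp
    moreover have "t * u $ i \<le> s * u $ i" using assms(3) True by (rule mult_right_mono)
    moreover have "s * u $ i \<le> s" using u \<open>0 \<le> s\<close> by (simp add: mult_left_le)
    ultimately show ?thesis using True \<open>0 \<le> s\<close> by simp
  next
    case False
    have "0 \<le> s" using assms by linarith
    have "t * u $ i \<le> 0" using False assms(2) by (simp add: mult_nonneg_nonpos)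
    moreover have "s * u $ i \<le> t * u $ i" using False assms(3) by (simp add: mult_right_mono_neg)
    moreover have "- s \<le> s * u $ i"
      using mult_left_mono[of "- 1" "u $ i" s] u \<open>0 \<le> s\<close> by simp
    ultimately show ?thesis using False \<open>0 \<le> s\<close> by (simp add: mult_nonneg_nonpos)
  qed
qed

lemma translates_disjoint_if_in_slab:
  fixes X :: "'a::real_inner set"
  assumes "norm u = 1" "\<And>x. x \<in> X \<Longrightarrow> \<bar>inner u x - b\<bar> \<le> h" "2 * h < \<bar>s - t\<bar>"
  shows "(\<lambda>x. x + s *\<^sub>R u) ` X \<inter> (\<lambda>x. x + t *\<^sub>R u) ` X = {}"
proof (rule ccontr)
  assume "\<not> ?thesis"
  then obtain x y where xy: "x \<in> X" "y \<in> X" "x + s *\<^sub>R u = y + t *\<^sub>R u"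
    by blast
  have "inner u u = 1" using assms(1) by (simp add: norm_eq_1)
  moreover have "inner u (x + s *\<^sub>R u) = inner u (y + t *\<^sub>R u)" using xy(3) by (rule arg_cong)
  ultimately have "inner u x + s = inner u y + t"
    by (simp only: inner_add_right inner_scaleR_right)
  moreover have "\<bar>inner u x - b\<bar> \<le> h" "\<bar>inner u y - b\<bar> \<le> h" using assms(2) xy(1,2) by blast+
  ultimately show False using assms(3) by linarith
qed

lemma fat_collection_card_translates_le:
  fixes C :: "(real^'n) set set"
  assumes fat: "fat_collection k C" and transl: "\<And>Y a. Y \<in> C \<Longrightarrow> (\<lambda>x. x + a) ` Y \<in> C"
    and X: "X \<in> C" "X \<noteq> {}" "bounded X" and u: "norm u \<le> 1"
    and \<delta>: "0 \<le> \<delta>" "real m * \<delta> \<le> obj_size X"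
    and disj: "\<And>i j. i \<noteq> j \<Longrightarrow>
      (\<lambda>x. x + (real i * \<delta>) *\<^sub>R u) ` X \<inter> (\<lambda>x. x + (real j * \<delta>) *\<^sub>R u) ` X = {}"
  shows "real m + 1 \<le> k"
proof -
  define s where "s = obj_size X"
  define T where "T j = (\<lambda>x. x + (real j * \<delta>) *\<^sub>R u) ` X" for j :: nat
  obtain p where p: "p \<in> X" using X(2) by blast
  have s: "0 \<le> s" unfolding s_def by (rule obj_size_nonneg[OF X(3,2)])
  have "inj_on T {0..m}"
  proof (rule inj_onI)
    fix i j assume "T i = T j"
    moreover have "T i \<noteq> {}" using X(2) by (simp add: T_def)
    ultimately show "i = j" using disj[of i j] by (auto simp: T_def)
  qed
  then have card: "card (T ` {0..m}) = m + 1" by (simp add: card_image)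
  \<comment> \<open>the cube of side s with corner a contains the segment from p to p + s u\<close>
  define a where "a = (\<chi> i. p $ i + min 0 (s * u $ i))"
  have "finite (T ` {0..m}) \<and> real (card (T ` {0..m})) \<le> k"
  proof (rule fat[unfolded fat_collection_def, rule_format, OF s])
    show "T ` {0..m} \<subseteq> C"
      using transl X(1) by (auto simp: T_def)
    show "pairwise disjnt (T ` {0..m})"
      by (rule pairwise_imageI) (simp add: T_def disj disjnt_def)
    fix Y assume "Y \<in> T ` {0..m}"
    then obtain j where j: "j \<le> m" "Y = T j" by auto
    have "obj_size Y = s"
      using obj_size_translation[OF X(3,2)] by (simp add: j T_def s_def)
    moreover have "real j * \<delta> \<le> s"
      using j(1) \<delta> mult_right_mono[of "real j" "real m" \<delta>] by (simp add: s_def)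
    then have "p + (real j * \<delta>) *\<^sub>R u \<in> Y \<inter> axis_cube a s"
      using p j add_scaleR_mem_axis_cube[OF u, of "real j * \<delta>" s p] \<delta>(1)
      by (auto simp: a_def T_def)
    ultimately show "s \<le> obj_size Y \<and> Y \<inter> axis_cube a s \<noteq> {}" by auto
  qed
  then show ?thesis using card by simp
qed

lemma obj_size_le_slab_width_if_fat:
  fixes C :: "(real^'n) set set"
  assumes fat: "fat_collection k C" and m: "0 < m" "k < real m + 1"
    and transl: "\<And>Y a. Y \<in> C \<Longrightarrow> (\<lambda>x. x + a) ` Y \<in> C"
    and X: "X \<in> C" "X \<noteq> {}" "bounded X"
    and slab: "norm u = 1" "\<And>x. x \<in> X \<Longrightarrow> \<bar>inner u x - b\<bar> \<le> h"
  shows "obj_size X \<le> 2 * real m * h"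
proof (rule ccontr)
  assume big: "\<not> obj_size X \<le> 2 * real m * h"
  define \<delta> where "\<delta> = obj_size X / m"
  have "0 \<le> h" using slab(2) X(2) by fastforce
  have \<delta>: "2 * h < \<delta>" "real m * \<delta> \<le> obj_size X"
    using big m(1) by (simp_all add: \<delta>_def field_simps)
  have disj: "(\<lambda>x. x + (real i * \<delta>) *\<^sub>R u) ` X \<inter> (\<lambda>x. x + (real j * \<delta>) *\<^sub>R u) ` X = {}"
    if "i \<noteq> j" for i j
  proof (rule translates_disjoint_if_in_slab[OF slab])
    have "1 \<le> \<bar>real i - real j\<bar>" using that by (cases "i < j") auto
    then have "\<delta> \<le> \<bar>real i - real j\<bar> * \<delta>"
      using \<delta>(1) \<open>0 \<le> h\<close> mult_right_mono[of 1 "\<bar>real i - real j\<bar>" \<delta>] by simp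
    also have "\<dots> = \<bar>real i * \<delta> - real j * \<delta>\<bar>"
      using \<delta>(1) \<open>0 \<le> h\<close> by (simp add: abs_mult flip: left_diff_distrib)
    finally show "2 * h < \<bar>real i * \<delta> - real j * \<delta>\<bar>" using \<delta>(1) by linarith
  qed
  have "0 \<le> \<delta>" using \<delta>(1) \<open>0 \<le> h\<close> by simp
  have "norm u \<le> 1" using slab(1) by simp
  from fat_collection_card_translates_le[OF fat transl X this \<open>0 \<le> \<delta>\<close> \<delta>(2) disj]
  have "real m + 1 \<le> k" .
  then show False using m(2) by simp
qed

lemma fat_collection_imp_globally_fat:
  fixes C :: "(real^'n) set set"
  assumes fat: "fat_collection k C"
    and transl: "\<And>Y a. Y \<in> C \<Longrightarrow> (\<lambda>x. x + a) ` Y \<in> C"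
    and obj: "\<And>X. X \<in> C \<Longrightarrow> compact X \<and> convex X \<and> X \<noteq> {}"
  shows "\<exists>K\<ge>1. \<forall>X\<in>C. globally_fat K X"
proof (intro exI conjI ballI)
  define m where "m = nat \<lceil>k\<rceil> + 1"
  define d where "d = real CARD('n)"
  show "1 \<le> 8 * d ^ 2 * m" by (intro mult_ge1_I) (auto simp: d_def m_def)
  fix X assume "X \<in> C"
  then have X: "compact X" "convex X" "X \<noteq> {}" using obj by auto
  then have "bounded X" by (simp add: compact_imp_bounded)
  obtain v where v: "v \<in> X" using X(3) by blast
  obtain u b h z where slab: "norm u = 1" "0 \<le> h" "\<And>x. x \<in> X \<Longrightarrow> \<bar>inner u x - b\<bar> \<le> h"
    and ball: "cball z (h / (4 * d)) \<subseteq> X"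
    using bounded_convex_slab_cball[OF X(2) \<open>bounded X\<close> v] unfolding d_def by metis
  have "obj_size X \<le> 2 * real m * h"
    by (rule obj_size_le_slab_width_if_fat[OF fat _ _ transl \<open>X \<in> C\<close> X(3) \<open>bounded X\<close> slab(1,3)])
      (auto simp: m_def, linarith)
  then have "d * obj_size X \<le> (8 * d ^ 2 * m) * (h / (4 * d))"
    by (simp add: d_def power2_eq_square field_simps)
  moreover have "X \<subseteq> cball v (d * obj_size X)"
    using dist_le_card_mult_obj_size[OF \<open>bounded X\<close> v] by (auto simp: d_def)
  moreover have "0 \<le> d * obj_size X"
    using obj_size_nonneg[OF \<open>bounded X\<close> X(3)] by (simp add: d_def)
  ultimately show "globally_fat (8 * d ^ 2 * m) X"
    unfolding globally_fat_def using ball slab(2)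
    by (intro exI[of _ z] exI[of _ "h / (4 * d)"] exI[of _ v] exI[of _ "d * obj_size X"])
      (simp add: d_def)
qed

section \<open>Thickness, global and local fatness\<close>

lemma measure_lebesgue_cball:
  fixes c :: "'a::euclidean_space"
  assumes "0 \<le> r"
  shows "measure lebesgue (cball c r) = unit_ball_vol DIM('a) * r ^ DIM('a)"
  using content_cball[of r c] assms by simp

lemma globally_fat_imp_thick:
  fixes X :: "(real^'n) set"
  assumes "globally_fat k X" "compact X" "0 \<le> k"
  shows "thick k X"
  unfolding thick_def
proof (intro allI impI)
  fix c r assume "min_enclosing_ball X c r"
  moreover obtain c1 r1 c2 r2 where g: "0 \<le> r1" "0 \<le> r2" "cball c1 r1 \<subseteq> X" "X \<subseteq> cball c2 r2"
    "r2 \<le> k * r1"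
    using assms(1) unfolding globally_fat_def by blast
  ultimately have r: "0 \<le> r" "r \<le> k * r1" unfolding min_enclosing_ball_def by force+
  have "measure lebesgue (cball c r) = unit_ball_vol CARD('n) * r ^ CARD('n)"
    using measure_lebesgue_cball[OF r(1), of c] by simp
  also have "\<dots> \<le> unit_ball_vol CARD('n) * (k * r1) ^ CARD('n)"
    using r by (intro mult_left_mono power_mono) auto
  also have "\<dots> = k ^ CARD('n) * measure lebesgue (cball c1 r1)"
    using measure_lebesgue_cball[OF g(1), of c1] by (simp add: power_mult_distrib)
  also have "\<dots> \<le> k ^ CARD('n) * measure lebesgue X"
    using g(3) assms(2,3)
    by (intro mult_left_mono measure_mono_fmeasurable) (auto simp: lmeasurable_compact)
  finally show "measure lebesgue (cball c r) \<le> k ^ CARD('n) * measure lebesgue X" .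
qed

lemma locally_fat_imp_thick:
  fixes X :: "(real^'n) set"
  assumes "locally_fat k X" "compact X" "X \<noteq> {}"
  shows "thick k X"
  unfolding thick_def
proof (intro allI impI)
  fix c r assume r: "min_enclosing_ball X c r"
  obtain c0 where c0: "c0 \<in> X" using assms(3) by blast
  obtain x where x: "x \<in> X" "\<And>y. y \<in> X \<Longrightarrow> dist c0 y \<le> dist c0 x"
    using distance_attains_sup[OF assms(2,3), of c0] by blast
  define \<rho> where "\<rho> = dist c0 x"
  have X: "X \<subseteq> cball c0 \<rho>" using x by (auto simp: \<rho>_def)
  then have "0 \<le> r" "r \<le> \<rho>" using r unfolding min_enclosing_ball_def by auto
  then have "measure lebesgue (cball c r) \<le> measure lebesgue (cball c0 \<rho>)"
    using measure_lebesgue_cball[of r c] measure_lebesgue_cball[of \<rho> c0] by (simp add: power_mono)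
  also have "\<dots> \<le> k ^ CARD('n) * measure lebesgue (X \<inter> cball c0 \<rho>)"
    using assms(1) c0 x(1) unfolding locally_fat_def \<rho>_def
    by (metis IntI zero_le_dist empty_iff mem_sphere)
  also have "X \<inter> cball c0 \<rho> = X" using X by blast
  finally show "measure lebesgue (cball c r) \<le> k ^ CARD('n) * measure lebesgue X" .
qed

lemma bounded_imp_bdd_above_dist:
  fixes X :: "'a::metric_space set"
  assumes "bounded X"
  shows "bdd_above ((\<lambda>x. dist c x) ` X)"
  using assms bounded_any_center[of X c] unfolding bdd_above_def by (auto simp: image_iff)

lemma lipschitz_on_SUP_dist:
  fixes X :: "'a::metric_space set"
  assumes "bounded X" "X \<noteq> {}"
  shows "1-lipschitz_on UNIV (\<lambda>c. SUP x\<in>X. dist c x)"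
proof (rule lipschitz_onI)
  note bdd = bounded_imp_bdd_above_dist[OF assms(1)]
  have le: "(SUP x\<in>X. dist c x) \<le> (SUP x\<in>X. dist c' x) + dist c c'" for c c'
  proof (rule cSUP_least[OF assms(2)])
    fix x assume "x \<in> X"
    then have "dist c' x \<le> (SUP x\<in>X. dist c' x)" by (rule cSUP_upper[OF _ bdd])
    then show "dist c x \<le> (SUP x\<in>X. dist c' x) + dist c c'"
      using dist_triangle[of c x c'] by linarith
  qed
  show "dist (SUP x\<in>X. dist c x) (SUP x\<in>X. dist c' x) \<le> 1 * dist c c'" for c c'
    using le[of c c'] le[of c' c] by (simp add: dist_real_def dist_commute abs_le_iff)
qed simp

lemma min_enclosing_ball_exists:
  fixes X :: "(real^'n) set"
  assumes "compact X" "X \<noteq> {}"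
  obtains c r where "min_enclosing_ball X c r"
proof -
  define F where "F c = (SUP x\<in>X. dist c x)" for c
  have "bounded X" using assms(1) by (rule compact_imp_bounded)
  have F_upper: "dist c x \<le> F c" if "x \<in> X" for c x
    unfolding F_def by (rule cSUP_upper[OF that bounded_imp_bdd_above_dist[OF \<open>bounded X\<close>]])
  have F_least: "F c \<le> r" if "X \<subseteq> cball c r" for c r
    unfolding F_def using that assms(2) by (intro cSUP_least) auto
  obtain x0 where x0: "x0 \<in> X" using assms(2) by blast
  define K where "K = cball x0 (F x0)"
  have "continuous_on K F"
    using lipschitz_on_continuous_on[OF lipschitz_on_SUP_dist[OF \<open>bounded X\<close> assms(2)]]
      continuous_on_subset unfolding F_def by blast
  moreover have "x0 \<in> K" using F_upper[OF x0, of x0] by (simp add: K_def)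
  ultimately obtain c where c: "c \<in> K" "\<And>y. y \<in> K \<Longrightarrow> F c \<le> F y"
    using continuous_attains_inf[of K F] by (auto simp: K_def)
  have F_min: "F c \<le> F c'" for c'
  proof (cases "c' \<in> K")
    case False
    then have "F x0 < dist c' x0" by (simp add: K_def dist_commute)
    then show ?thesis using c(2)[OF \<open>x0 \<in> K\<close>] F_upper[OF x0, of c'] by linarith
  qed (use c in auto)
  then have "min_enclosing_ball X c (F c)"
    unfolding min_enclosing_ball_def
  proof (intro conjI allI impI)
    show "0 \<le> F c" using F_upper[OF x0, of c] zero_le_dist[of c x0] by linarith
    show "X \<subseteq> cball c (F c)" using F_upper by auto
    show "F c \<le> r'" if "X \<subseteq> cball c' r'" for c' r'
      using F_min[of c'] F_least[OF that] by linarith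
  qed
  then show thesis by (rule that)
qed

lemma convex_measure_Int_cball_ge:
  fixes X :: "'a::euclidean_space set"
  assumes X: "convex X" "compact X" "c \<in> X" "X \<subseteq> cball c D" and r: "0 \<le> r" "r \<le> D"
  shows "(r / D) ^ DIM('a) * measure lebesgue X \<le> measure lebesgue (X \<inter> cball c r)"
proof -
  define t where "t = r / D"
  have t: "0 \<le> t" "t \<le> 1" "t * D = r"
    using r by (auto simp: t_def divide_le_eq_1)
  define H where "H = (\<lambda>x. t *\<^sub>R x + (1 - t) *\<^sub>R c) ` X"
  have "H \<subseteq> X \<inter> cball c r"
  proof
    fix y assume "y \<in> H"
    then obtain x where x: "x \<in> X" "y = t *\<^sub>R x + (1 - t) *\<^sub>R c" by (auto simp: H_def)
    have "dist c y = t * dist c x"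
      using t(1) by (simp add: x(2) dist_norm algebra_simps flip: scaleR_diff_right)
    also have "\<dots> \<le> t * D" using X(4) x(1) t(1) by (simp add: mult_left_mono subset_iff)
    finally show "y \<in> X \<inter> cball c r"
      using convexD[OF X(1) x(1) X(3), of t "1 - t"] t x(2) by simp
  qed
  moreover have "compact H"
    unfolding H_def by (rule compact_continuous_image[OF _ X(2)]) (intro continuous_intros)
  ultimately have "measure lebesgue H \<le> measure lebesgue (X \<inter> cball c r)"
    using X(2) by (intro measure_mono_fmeasurable)
      (auto simp: lmeasurable_compact compact_Int_closed fmeasurableD)
  moreover have "\<bar>t\<bar> = r / D" using t(1) by (simp add: t_def flip: abs_divide)
  ultimately show ?thesis
    using measure_lebesgue_affine[of t "(1 - t) *\<^sub>R c" X] by (simp add: H_def)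
qed

lemma thick_imp_locally_fat:
  fixes X :: "(real^'n) set"
  assumes "thick k X" "compact X" "convex X" "X \<noteq> {}" "0 \<le> k"
  shows "locally_fat (2 * k) X"
  unfolding locally_fat_def
proof (intro allI impI)
  fix c0 r assume c0: "c0 \<in> X" and r: "0 \<le> r" and "sphere c0 r \<inter> X \<noteq> {}"
  then obtain x where x: "x \<in> X" "dist c0 x = r" by (auto simp: sphere_def)
  obtain c R where R: "min_enclosing_ball X c R"
    using min_enclosing_ball_exists[OF assms(2,4)] .
  then have "0 \<le> R" "X \<subseteq> cball c R" by (auto simp: min_enclosing_ball_def)
  have X: "X \<subseteq> cball c0 (2 * R)"
  proof
    fix y assume "y \<in> X"
    then have "dist c0 c \<le> R" "dist c y \<le> R"
      using c0 \<open>X \<subseteq> cball c R\<close> by (auto simp: dist_commute)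
    then show "y \<in> cball c0 (2 * R)" using dist_triangle[of c0 y c] by simp
  qed
  then have "r \<le> 2 * R" using x by auto
  define \<omega> where "\<omega> = unit_ball_vol CARD('n)"
  have "\<omega> * R ^ CARD('n) \<le> k ^ CARD('n) * measure lebesgue X"
    using assms(1) R measure_lebesgue_cball[OF \<open>0 \<le> R\<close>, of c]
    unfolding thick_def \<omega>_def by force
  have "measure lebesgue (cball c0 r) = \<omega> * r ^ CARD('n)"
    using measure_lebesgue_cball[OF r, of c0] by (simp add: \<omega>_def)
  also have "\<dots> = 2 ^ CARD('n) * (r / (2 * R)) ^ CARD('n) * (\<omega> * R ^ CARD('n))"
    \<comment> \<open>if R = 0 then also r = 0, and both sides vanish\<close>
    using \<open>r \<le> 2 * R\<close> r by (cases "R = 0") (simp_all add: power_divide power_mult_distrib)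
  also have "\<dots> \<le> 2 ^ CARD('n) * (r / (2 * R)) ^ CARD('n) * (k ^ CARD('n) * measure lebesgue X)"
    using \<open>\<omega> * R ^ CARD('n) \<le> _\<close> r \<open>0 \<le> R\<close> by (intro mult_left_mono) auto
  also have "\<dots> = (2 * k) ^ CARD('n) * ((r / (2 * R)) ^ CARD('n) * measure lebesgue X)"
    by (simp add: power_mult_distrib)
  also have "\<dots> \<le> (2 * k) ^ CARD('n) * measure lebesgue (X \<inter> cball c0 r)"
    using convex_measure_Int_cball_ge[OF assms(3,2) c0 X r \<open>r \<le> 2 * R\<close>] assms(5)
    by (intro mult_left_mono) auto
  finally show "measure lebesgue (cball c0 r) \<le> (2 * k) ^ CARD('n) * measure lebesgue (X \<inter> cball c0 r)" .
qed

section \<open>Locally fat collections are fat\<close>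

lemma connected_meets_sphere:
  fixes X :: "'a::metric_space set"
  assumes "connected X" "p \<in> X" "q \<in> X" "0 \<le> \<rho>" "\<rho> \<le> dist p q"
  shows "sphere p \<rho> \<inter> X \<noteq> {}"
proof -
  have "connected ((\<lambda>z. dist p z) ` X)"
    by (rule connected_continuous_image[OF _ assms(1)]) (intro continuous_intros)
  moreover have "0 \<in> (\<lambda>z. dist p z) ` X" "dist p q \<in> (\<lambda>z. dist p z) ` X"
    using assms(2,3) by force+
  ultimately have "\<rho> \<in> (\<lambda>z. dist p z) ` X"
    using assms(4,5) unfolding connected_iff_interval by blast
  then show ?thesis by auto
qed

lemma finite_card_mult_le_if_disjoint_measure_ge:
  assumes disj: "pairwise (\<lambda>i j. disjnt (F i) (F j)) I"
    and F: "\<And>i. i \<in> I \<Longrightarrow> F i \<in> fmeasurable M" "\<And>i. i \<in> I \<Longrightarrow> F i \<subseteq> B"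
    and m: "\<And>i. i \<in> I \<Longrightarrow> m \<le> measure M (F i)" "0 < m"
    and B: "B \<in> fmeasurable M"
  shows "finite I \<and> real (card I) * m \<le> measure M B"
proof -
  have card: "real (card J) * m \<le> measure M B" if J: "finite J" "J \<subseteq> I" for J
  proof -
    have "real (card J) * m \<le> (\<Sum>i\<in>J. measure M (F i))"
      using sum_mono[of J "\<lambda>_. m" "\<lambda>i. measure M (F i)"] m(1) J(2) by auto
    also have "\<dots> = measure M (\<Union>i\<in>J. F i)"
      using J F(1) pairwise_subset[OF disj J(2)] by (intro measure_UNION'[symmetric]) auto
    also have "\<dots> \<le> measure M B"
      using J F B by (intro measure_mono_fmeasurable) auto
    finally show ?thesis .
  qed
  have "finite I"
  proof (rule ccontr)
    assume "infinite I"
    define n where "n = nat \<lceil>measure M B / m\<rceil> + 1"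
    obtain J where "finite J" "J \<subseteq> I" "card J = n"
      using infinite_arbitrarily_large[OF \<open>infinite I\<close>] by blast
    moreover have "measure M B / m < real n"
      using of_nat_ceiling[of "measure M B / m"] by (simp add: n_def)
    then have "measure M B < real n * m"
      using m(2) by (simp add: field_simps)
    ultimately show False
      using card[of J] by simp
  qed
  then show ?thesis using card by blast
qed

lemma object_meets_sphere:
  fixes X :: "(real^'n) set"
  assumes "is_object X" "p \<in> X" "0 \<le> \<rho>" "2 * \<rho> \<le> obj_size X"
  shows "sphere p \<rho> \<inter> X \<noteq> {}"
proof -
  have X: "compact X" "X \<noteq> {}" "connected X"
    using assms(1) by (auto simp: is_object_def path_connected_imp_connected)
  obtain x y where xy: "x \<in> X" "y \<in> X" "obj_size X \<le> dist x y"
    using obj_size_le_dist[OF X(1,2)] .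
  have "dist x y \<le> dist p x + dist p y" by (rule dist_triangle3)
  then have "\<rho> \<le> dist p x \<or> \<rho> \<le> dist p y" using xy(3) assms(4) by linarith
  then obtain q where "q \<in> X" "\<rho> \<le> dist p q"
    using xy(1,2) by blast
  then show ?thesis
    using connected_meets_sphere[OF X(3) assms(2)] assms(3) by blast
qed

lemma dist_le_card_mult_if_mem_axis_cube:
  fixes a p :: "real^'n"
  assumes "p \<in> axis_cube a r"
  shows "dist a p \<le> real CARD('n) * r"
proof -
  have "dist a p \<le> (\<Sum>i\<in>UNIV. \<bar>(a - p) $ i\<bar>)"
    unfolding dist_norm by (rule norm_le_l1_cart)
  also have "\<dots> \<le> (\<Sum>i\<in>(UNIV::'n set). r)"
  proof (rule sum_mono)
    fix i
    have "a $ i \<le> p $ i" "p $ i \<le> a $ i + r" using assms unfolding mem_axis_cube_iff by auto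
    then show "\<bar>(a - p) $ i\<bar> \<le> r" by simp
  qed
  finally show ?thesis by simp
qed

lemma locally_fat_measure_near_axis_cube_ge:
  fixes X :: "(real^'n) set"
  assumes lf: "locally_fat k X" and X: "is_object X"
    and r: "0 < r" "r \<le> obj_size X" and meets: "X \<inter> axis_cube a r \<noteq> {}" and k: "0 \<le> k"
  shows "unit_ball_vol CARD('n) * (r / 2) ^ CARD('n)
           \<le> k ^ CARD('n) * measure lebesgue (X \<inter> cball a (2 * real CARD('n) * r))"
proof -
  obtain p where p: "p \<in> X" "p \<in> axis_cube a r" using meets by blast
  have "sphere p (r / 2) \<inter> X \<noteq> {}"
    using object_meets_sphere[OF X p(1)] r by simp
  then have "measure lebesgue (cball p (r / 2))
      \<le> k ^ CARD('n) * measure lebesgue (X \<inter> cball p (r / 2))"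
    using lf p(1) r(1) unfolding locally_fat_def by simp
  then have "unit_ball_vol CARD('n) * (r / 2) ^ CARD('n)
      \<le> k ^ CARD('n) * measure lebesgue (X \<inter> cball p (r / 2))"
    using measure_lebesgue_cball[of "r / 2" p] r(1) by simp
  also have "\<dots> \<le> k ^ CARD('n) * measure lebesgue (X \<inter> cball a (2 * real CARD('n) * r))"
  proof (intro mult_left_mono measure_mono_fmeasurable Int_mono subset_refl subsetI)
    fix z assume "z \<in> cball p (r / 2)"
    moreover have "1 \<le> real CARD('n)" by simp
    then have "r / 2 \<le> real CARD('n) * r"
      using mult_right_mono[of 1 "real CARD('n)" r] r(1) by linarith
    ultimately show "z \<in> cball a (2 * real CARD('n) * r)"
      using dist_triangle[of a z p] dist_le_card_mult_if_mem_axis_cube[OF p(2)] by simp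
  qed (use X k in \<open>auto simp: is_object_def
    intro!: lmeasurable_compact fmeasurableD[OF lmeasurable_compact]\<close>)
  finally show ?thesis .
qed

lemma pairwise_disjnt_common_point_card_le_1:
  assumes "pairwise disjnt S" "\<And>X. X \<in> S \<Longrightarrow> a \<in> X"
  shows "finite S \<and> card S \<le> 1"
proof (cases "S = {}")
  case False
  then obtain X where X: "X \<in> S" by blast
  have "Y = X" if "Y \<in> S" for Y
    using assms that X unfolding pairwise_def disjnt_def by blast
  then have "S = {X}" using X by blast
  then show ?thesis by simp
qed simp

lemma locally_fat_card_near_axis_cube_le:
  fixes C S :: "(real^'n) set set"
  assumes obj: "\<And>X. X \<in> C \<Longrightarrow> is_object X" and lf: "\<And>X. X \<in> C \<Longrightarrow> locally_fat k X"
    and k: "1 \<le> k" and r: "0 < r" and S: "S \<subseteq> C" "pairwise disjnt S"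
    and big: "\<And>X. X \<in> S \<Longrightarrow> r \<le> obj_size X \<and> X \<inter> axis_cube a r \<noteq> {}"
  shows "finite S \<and> real (card S) \<le> (4 * real CARD('n) * k) ^ CARD('n)"
proof -
  define c where "c = (4 * real CARD('n) * k) ^ CARD('n)"
  define R where "R = 2 * real CARD('n) * r"
  define m where "m = unit_ball_vol CARD('n) * (r / 2) ^ CARD('n) / k ^ CARD('n)"
  have "0 < m" using r k by (simp add: m_def)
  have "finite S \<and> real (card S) * m \<le> measure lebesgue (cball a R)"
  proof (rule finite_card_mult_le_if_disjoint_measure_ge)
    show "pairwise (\<lambda>X Y. disjnt (X \<inter> cball a R) (Y \<inter> cball a R)) S"
      using S(2) unfolding pairwise_def disjnt_def by blast
    show "m \<le> measure lebesgue (X \<inter> cball a R)" if "X \<in> S" for X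
      using locally_fat_measure_near_axis_cube_ge[OF lf obj, of X r a] big that S(1) r k
      by (auto simp: m_def R_def divide_le_eq mult.commute)
  qed (use \<open>0 < m\<close> obj S(1) in \<open>auto simp: is_object_def intro!: lmeasurable_compact\<close>)
  moreover have "measure lebesgue (cball a R) = c * m"
  proof -
    have "c * (r / 2) ^ CARD('n) / k ^ CARD('n) = (4 * real CARD('n) * k * (r / 2) / k) ^ CARD('n)"
      by (simp only: c_def power_mult_distrib power_divide)
    also have "4 * real CARD('n) * k * (r / 2) / k = R" using k by (simp add: R_def)
    finally have "R ^ CARD('n) = c * (r / 2) ^ CARD('n) / k ^ CARD('n)" ..
    then show ?thesis
      using measure_lebesgue_cball[of R a] r by (simp add: R_def m_def)
  qed
  ultimately show ?thesis
    using \<open>0 < m\<close> by (simp add: c_def mult_le_cancel_right_pos)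
qed

lemma locally_fat_imp_fat_collection:
  fixes C :: "(real^'n) set set"
  assumes obj: "\<And>X. X \<in> C \<Longrightarrow> is_object X" and lf: "\<And>X. X \<in> C \<Longrightarrow> locally_fat k X"
    and k: "1 \<le> k"
  shows "\<exists>c\<ge>1. fat_collection c C"
proof (intro exI conjI)
  define c where "c = (4 * real CARD('n) * k) ^ CARD('n)"
  have "1 \<le> real CARD('n)" by simp
  then show c: "1 \<le> c" unfolding c_def using k by (simp add: mult_ge1_I)
  show "fat_collection c C"
    unfolding fat_collection_def
  proof (intro allI impI)
    fix r a S
    assume r: "0 \<le> r" and S: "S \<subseteq> C" "pairwise disjnt S"
      and big: "\<forall>X\<in>S. r \<le> obj_size X \<and> X \<inter> axis_cube a r \<noteq> {}"
    show "finite S \<and> real (card S) \<le> c"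
    proof (cases "r = 0")
      case True
      then have "a \<in> X" if "X \<in> S" for X
        using big that by (auto simp: axis_cube_def)
      then show ?thesis
        using pairwise_disjnt_common_point_card_le_1[OF S(2)] c by fastforce
    next
      case False
      with r have "0 < r" by simp
      from locally_fat_card_near_axis_cube_le[OF obj lf k this S] big show ?thesis
        unfolding c_def by blast
    qed
  qed
qed

lemma rotation_id: "rotation (\<lambda>x. x)"
  unfolding rotation_def
  by (metis eq_id_iff orthogonal_transformation_id matrix_id_mat_1 det_I)

theorem proposition3p9:
  fixes C :: "(real^'n) set set"
  assumes "CARD('n) \<ge> 2"
    and "\<forall>X\<in>C. is_object X \<and> convex X"
    and "\<forall>X\<in>C. \<forall>f a. rotation f \<longrightarrow> (\<lambda>x. f x + a) ` X \<in> C"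
  shows "((\<exists>k0\<ge>1. fat_collection k0 C) \<longleftrightarrow> (\<exists>k1\<ge>1. \<forall>X\<in>C. globally_fat k1 X))
       \<and> ((\<exists>k1\<ge>1. \<forall>X\<in>C. globally_fat k1 X) \<longleftrightarrow> (\<exists>k2\<ge>1. \<forall>X\<in>C. thick k2 X))
       \<and> ((\<exists>k2\<ge>1. \<forall>X\<in>C. thick k2 X) \<longleftrightarrow> (\<exists>k3\<ge>2. \<forall>X\<in>C. locally_fat k3 X))"
proof -
  have obj: "is_object X" "compact X \<and> convex X \<and> X \<noteq> {}" if "X \<in> C" for X
    using assms(2) that by (auto simp: is_object_def)
  have transl: "(\<lambda>x. x + a) ` X \<in> C" if "X \<in> C" for X a
    using assms(3) rotation_id that by blast
  let ?fat = "\<exists>k0\<ge>1. fat_collection k0 C"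
  let ?gfat = "\<exists>k1\<ge>1. \<forall>X\<in>C. globally_fat k1 X"
  let ?thick = "\<exists>k2\<ge>1. \<forall>X\<in>C. thick k2 X"
  let ?lfat = "\<exists>k3\<ge>2. \<forall>X\<in>C. locally_fat k3 X"
  have "?fat \<Longrightarrow> ?gfat"
    using fat_collection_imp_globally_fat[OF _ transl obj(2)] by blast
  moreover have "?gfat \<Longrightarrow> ?thick"
    using globally_fat_imp_thick obj(2) by (meson order_trans zero_le_one)
  moreover have "?thick \<Longrightarrow> ?lfat"
  proof (elim exE conjE)
    fix k assume "1 \<le> k" "\<forall>X\<in>C. thick k X"
    then have "2 \<le> 2 * k" "\<forall>X\<in>C. locally_fat (2 * k) X"
      using thick_imp_locally_fat obj(2) by force+
    then show ?lfat by blast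
  qed
  moreover have "?lfat \<Longrightarrow> ?thick"
    using locally_fat_imp_thick obj(2) by (metis one_le_numeral order_trans)
  moreover have "?lfat \<Longrightarrow> ?fat"
    using locally_fat_imp_fat_collection obj(1) by (metis one_le_numeral order_trans)
  ultimately show ?thesis by blast
qed

end
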